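(* Let $n\ge1$, $\epsilon>0$, $\delta>0$ be arbitrary. For every $C>0$ the open subset $B(\epsilon)\times\mathbb D_{<\delta}(T^*\mathbb T^n)$ of $(\mathbb R^3\times T^*\mathbb T^n,\ker(\alpha_{\mathrm{OT}}+\lambda_{\mathrm{can}}))$ contains an embedded hypersurface $$S_C=\mathbb D^2_{\le\pi}\times\Bigl\{(s_1,\dots,s_n;t_1,\dots,t_n)\in\mathbb R^{2n}\ \Bigm|\ |s_j|<C,\ |t_j|<\tfrac{\delta}{2\sqrt n}\text{ for all }j\Bigr\}$$ on which the contact structure induces the singular distribution $\ker\bigl(r\sin r\,d\vartheta-\sum_{j=1}^n t_j\,ds_j\bigr)$, with $(r,\vartheta)$ polar coordinates on the disk.
   Context: $\alpha_{\mathrm{OT}}=\cos r\,dz+r\sin r\,d\vartheta$ on $\mathbb R^3$ in cylindrical coordinates $(r,\vartheta,z)$. Fix a small $\delta_0>0$ and set $B(h)=\mathbb D^2_{<\pi+\delta_0}\times(-h,h)$. On $T^*\mathbb T^n$ use coordinates $(q_1,\dots,q_n;p_1,\dots,p_n)$ with $q_j\in\mathbb R/2\pi\mathbb Z$, $\lambda_{\mathrm{can}}=-\sum_j p_j\,dq_j$, and $\mathbb D_{<\delta}(T^*\mathbb T^n)=\{\|\mathbf p\|<\delta\}$ with the Euclidean norm of $\mathbf p=(p_1,\dots,p_n)$. The induced singular distribution of an embedding $\iota$ is $(D\iota)^{-1}(\xi)$. *)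

theory Defs
  imports "HOL-Analysis.Analysis"
begin

fun Ck_on :: "nat \<Rightarrow> 'a::euclidean_space set \<Rightarrow> ('a \<Rightarrow> 'b::euclidean_space) \<Rightarrow> bool" where
  "Ck_on 0 U f = continuous_on U f"
| "Ck_on (Suc k) U f =
     (f differentiable_on U \<and> (\<forall>v. Ck_on k U (\<lambda>x. frechet_derivative f (at x) v)))"

definition smooth_on :: "'a::euclidean_space set \<Rightarrow> ('a \<Rightarrow> 'b::euclidean_space) \<Rightarrow> bool" where
  "smooth_on U f \<longleftrightarrow> (\<forall>k. Ck_on k U f)"

definition sinc :: "real \<Rightarrow> real" where
  "sinc r = (if r = 0 then 1 else sin r / r)"

(* Points of R^3 x T^*T^n are represented through the universal cover
   R^3 x R^n x R^n: ((x,y,z),(q,p)) with q the lifted angle coordinates. *)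
type_synonym 'n amb = "(real \<times> real \<times> real) \<times> ((real^'n) \<times> (real^'n))"
(* Points of the hypersurface: ((u,w),(s,t)), (u,w) Cartesian coordinates on the disk *)
type_synonym 'n hyp = "(real \<times> real) \<times> ((real^'n) \<times> (real^'n))"

(* covering map R^n -> T^n = (R/2piZ)^n, realised in (S^1)^n inside C^n *)
definition tor :: "real^'n \<Rightarrow> complex^'n" where
  "tor q = (\<chi> j. cis (q $ j))"

definition proj_amb :: "'n amb \<Rightarrow> (real \<times> real \<times> real) \<times> ((complex^'n) \<times> (real^'n))" where
  "proj_amb P = (case P of ((x,y,z),(q,p)) \<Rightarrow> ((x,y,z),(tor q, p)))"

(* alpha_OT + lambda_can at point P applied to tangent vector V;
   r sin r d\<theta> = (sin r / r)(x dy - y dx) in Cartesian coordinates *)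
definition alpha :: "('n::finite) amb \<Rightarrow> 'n amb \<Rightarrow> real" where
  "alpha P V = (case P of ((x,y,z),(q,p)) \<Rightarrow> case V of ((dx,dy,dz),(dq,dp)) \<Rightarrow>
     (let r = sqrt (x^2 + y^2) in
       cos r * dz + sinc r * (x * dy - y * dx) - (\<Sum>j\<in>UNIV. p $ j * dq $ j)))"

definition beta :: "('n::finite) hyp \<Rightarrow> 'n hyp \<Rightarrow> real" where
  "beta P V = (case P of ((u,w),(s,t)) \<Rightarrow> case V of ((du,dw),(ds,dt)) \<Rightarrow>
     (let r = sqrt (u^2 + w^2) in
       sinc r * (u * dw - w * du) - (\<Sum>j\<in>UNIV. t $ j * ds $ j)))"

definition S_C :: "real \<Rightarrow> real \<Rightarrow> ('n::finite) hyp set" where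
  "S_C C \<delta> = {((u,w),(s,t)). u^2 + w^2 \<le> pi^2 \<and>
      (\<forall>j. \<bar>s $ j\<bar> < C \<and> \<bar>t $ j\<bar> < \<delta> / (2 * sqrt (real CARD('n))))}"

definition target :: "real \<Rightarrow> real \<Rightarrow> real \<Rightarrow> ('n::finite) amb set" where
  "target \<delta>\<^sub>0 \<epsilon> \<delta> = {((x,y,z),(q,p)). x^2 + y^2 < (pi + \<delta>\<^sub>0)^2 \<and> \<bar>z\<bar> < \<epsilon> \<and> norm p < \<delta>}"

end

theory Submission
  imports Defs
begin

text \<open>The embedding is
  \<open>\<iota>(x, s, t) = (x, \<langle>a, s\<rangle>; s, t + cos r \<cdot> a)\<close> for a weight vector \<open>a\<close> with nonnegative entries.
  Pulling back, \<open>cos r dz = cos r \<langle>a, ds\<rangle>\<close> cancels the extra term \<open>cos r \<langle>a, ds\<rangle>\<close> of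
  \<open>-\<Sum> p\<^sub>j dq\<^sub>j\<close>, so \<open>\<iota>\<^sup>*(\<alpha>\<^sub>O\<^sub>T + \<lambda>\<^sub>c\<^sub>a\<^sub>n) = r sin r d\<theta> - \<Sum> t\<^sub>j ds\<^sub>j\<close> exactly.
  Choosing \<open>a\<^sub>j = \<eta> N\<^bsup>f j\<^esup>\<close> with \<open>f\<close> injective and \<open>N - 1 \<ge> C/\<pi>\<close>, two lifts in \<open>[-C, C]\<close>
  of the same angle differ by \<open>2\<pi>k\<close> with \<open>|k| < N\<close>, so the coordinate \<open>z = \<langle>a, s\<rangle>\<close> separates
  points whose \<open>s\<close> agree modulo \<open>2\<pi>\<close>, since a relation \<open>\<Sum> k\<^sub>j N\<^bsup>f j\<^esup> = 0\<close> with small integer digits is trivial; a small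
  \<open>\<eta>\<close> keeps the image inside \<open>B(\<epsilon>) \<times> \<bbbD>\<^sub><\<^sub>\<delta>\<close>. Smoothness of \<open>cos r = cos \<surd>(u\<^sup>2 + w\<^sup>2)\<close> comes from
  \<open>cos \<surd>y\<close> being an entire power series in \<open>y\<close>, and continuity of the inverse from compactness
  of the closure of \<open>S\<^sub>C\<close>.\<close>

definition cos_sqrt_coeff :: "nat \<Rightarrow> real" where
  "cos_sqrt_coeff n = (-1)^n / fact (2*n)"

text \<open>The \<open>m\<close>-th derivative of the entire extension of \<open>y \<mapsto> cos \<surd>y\<close>.\<close>
definition cos_sqrt_diff :: "nat \<Rightarrow> real \<Rightarrow> real" where
  "cos_sqrt_diff m y = (\<Sum>n. (diffs ^^ m) cos_sqrt_coeff n * y^n)"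

lemma summable_cos_sqrt_coeff: "summable (\<lambda>n. cos_sqrt_coeff n * y^n)"
proof (rule summable_comparison_test')
  show "summable (\<lambda>n. inverse (fact n) * \<bar>y\<bar>^n)" by (rule summable_exp)
  fix n :: nat
  have "fact n \<le> (fact (2*n) :: real)" by (intro fact_mono) auto
  hence "\<bar>y\<bar>^n / fact (2*n) \<le> \<bar>y\<bar>^n / fact n"
    by (intro divide_left_mono) auto
  thus "norm (cos_sqrt_coeff n * y^n) \<le> inverse (fact n) * \<bar>y\<bar>^n"
    by (simp add: cos_sqrt_coeff_def abs_mult power_abs divide_inverse mult.commute)
qed

lemma summable_diffs_iterate:
  fixes c :: "nat \<Rightarrow> 'a::{real_normed_field,banach}"
  assumes "\<And>y. summable (\<lambda>n. c n * y^n)"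
  shows "summable (\<lambda>n. (diffs ^^ m) c n * y^n)"
proof (induction m arbitrary: y)
  case 0 thus ?case using assms by simp
next
  case (Suc m) thus ?case using termdiff_converges_all[of "(diffs ^^ m) c"] by simp
qed

lemma cos_sqrt_diff_has_field_derivative:
  "(cos_sqrt_diff m has_field_derivative cos_sqrt_diff (Suc m) y) (at y)"
  unfolding cos_sqrt_diff_def[abs_def]
  using termdiffs_strong_converges_everywhere[OF summable_diffs_iterate[OF summable_cos_sqrt_coeff]]
  by simp

lemma cos_sqrt_diff_0: "0 \<le> y \<Longrightarrow> cos_sqrt_diff 0 y = cos (sqrt y)"
proof -
  assume "0 \<le> y"
  hence "(sqrt y) ^ (2 * n) = y ^ n" for n by (simp add: power_mult)
  with cos_paired[of "sqrt y"] have "(\<lambda>n. cos_sqrt_coeff n * y^n) sums cos (sqrt y)"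
    by (simp add: cos_sqrt_coeff_def)
  thus ?thesis by (simp add: cos_sqrt_diff_def sums_unique[symmetric])
qed

definition radius_sq :: "('n::finite) hyp \<Rightarrow> real" where
  "radius_sq x = (fst (fst x))^2 + (snd (fst x))^2"

definition radius_sq_deriv :: "('n::finite) hyp \<Rightarrow> 'n hyp \<Rightarrow> real" where
  "radius_sq_deriv x v = 2 * fst (fst x) * fst (fst v) + 2 * snd (fst x) * snd (fst v)"

lemma bounded_linear_radius_sq_deriv_point:
  "bounded_linear (\<lambda>x::('n::finite) hyp. radius_sq_deriv x v)"
proof -
  have "(\<lambda>x. radius_sq_deriv x v) =
      (\<lambda>x. fst (fst x) * (2 * fst (fst v)) + snd (fst x) * (2 * snd (fst v)))"
    unfolding radius_sq_deriv_def by (simp add: fun_eq_iff)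
  moreover have "bounded_linear (\<lambda>x::('n::finite) hyp. fst (fst x) * (2 * fst (fst v)) + snd (fst x) * (2 * snd (fst v)))"
    by (intro bounded_linear_add bounded_linear_compose[OF bounded_linear_mult_left]
      bounded_linear_compose[OF bounded_linear_fst bounded_linear_fst]
      bounded_linear_compose[OF bounded_linear_snd bounded_linear_fst])
  ultimately show ?thesis by simp
qed

lemma radius_sq_has_derivative: "(radius_sq has_derivative radius_sq_deriv x) (at x)"
  unfolding radius_sq_def[abs_def] radius_sq_deriv_def[abs_def]
  by (auto intro!: derivative_eq_intros simp: algebra_simps)

lemma cos_sqrt_diff_radius_sq_has_derivative:
  "((\<lambda>x. cos_sqrt_diff m (radius_sq x)) has_derivative
     (\<lambda>v. cos_sqrt_diff (Suc m) (radius_sq x) * radius_sq_deriv x v)) (at x)"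
  using has_derivative_compose[OF radius_sq_has_derivative
      cos_sqrt_diff_has_field_derivative[unfolded has_field_derivative_def]] .


inductive_set disk_algebra :: "(('n::finite) hyp \<Rightarrow> real) set" where
  const: "(\<lambda>x. c) \<in> disk_algebra"
| linear: "bounded_linear l \<Longrightarrow> l \<in> disk_algebra"
| cos_sqrt_diff: "(\<lambda>x. cos_sqrt_diff m (radius_sq x)) \<in> disk_algebra"
| add: "f \<in> disk_algebra \<Longrightarrow> g \<in> disk_algebra \<Longrightarrow> (\<lambda>x. f x + g x) \<in> disk_algebra"
| mult: "f \<in> disk_algebra \<Longrightarrow> g \<in> disk_algebra \<Longrightarrow> (\<lambda>x. f x * g x) \<in> disk_algebra"

lemma disk_algebra_has_derivative:
  "g \<in> disk_algebra \<Longrightarrow>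
     \<exists>g'. (\<forall>x. (g has_derivative g' x) (at x)) \<and> (\<forall>v. (\<lambda>x. g' x v) \<in> disk_algebra)"
proof (induction rule: disk_algebra.induct)
  case (const c)
  show ?case by (rule exI[of _ "\<lambda>x v. 0"]) (auto intro: disk_algebra.const)
next
  case (linear l)
  show ?case
    by (rule exI[of _ "\<lambda>x. l"])
       (auto intro: disk_algebra.const bounded_linear_imp_has_derivative linear)
next
  case (cos_sqrt_diff m)
  show ?case
    by (rule exI[of _ "\<lambda>x v. cos_sqrt_diff (Suc m) (radius_sq x) * radius_sq_deriv x v"])
       (intro conjI allI cos_sqrt_diff_radius_sq_has_derivative disk_algebra.mult
         disk_algebra.cos_sqrt_diff disk_algebra.linear[OF bounded_linear_radius_sq_deriv_point])
next
  case (add f g)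
  then obtain f' g' where
      f: "\<forall>x. (f has_derivative f' x) (at x)" "\<forall>v. (\<lambda>x. f' x v) \<in> disk_algebra" and
      g: "\<forall>x. (g has_derivative g' x) (at x)" "\<forall>v. (\<lambda>x. g' x v) \<in> disk_algebra"
    by blast
  show ?case
    by (rule exI[of _ "\<lambda>x v. f' x v + g' x v"])
       (use f g in \<open>auto intro: has_derivative_add disk_algebra.add\<close>)
next
  case (mult f g)
  then obtain f' g' where
      f: "\<forall>x. (f has_derivative f' x) (at x)" "\<forall>v. (\<lambda>x. f' x v) \<in> disk_algebra" and
      g: "\<forall>x. (g has_derivative g' x) (at x)" "\<forall>v. (\<lambda>x. g' x v) \<in> disk_algebra"
    by blast
  show ?case
  proof (intro exI[of _ "\<lambda>x v. f x * g' x v + f' x v * g x"] conjI allI)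
    fix x
    show "((\<lambda>x. f x * g x) has_derivative (\<lambda>v. f x * g' x v + f' x v * g x)) (at x)"
      using f g by (blast intro: has_derivative_mult)
  next
    fix v
    show "(\<lambda>x. f x * g' x v + f' x v * g x) \<in> disk_algebra"
      using disk_algebra.add[OF disk_algebra.mult[OF mult.hyps(1) g(2)[rule_format, of v]]
          disk_algebra.mult[OF f(2)[rule_format, of v] mult.hyps(2)]] .
  qed
qed

lemma Ck_on_if_derivatives_closed:
  assumes "\<And>h. h \<in> F \<Longrightarrow> h differentiable_on U \<and> (\<forall>v. (\<lambda>x. frechet_derivative h (at x) v) \<in> F)"
  shows "h \<in> F \<Longrightarrow> Ck_on k U h"
proof (induction k arbitrary: h)
  case 0 thus ?case using assms differentiable_imp_continuous_on by auto
next
  case (Suc k) thus ?case using assms by auto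
qed

lemma smooth_on_if_derivatives_closed:
  assumes "\<And>h. h \<in> F \<Longrightarrow> h differentiable_on U \<and> (\<forall>v. (\<lambda>x. frechet_derivative h (at x) v) \<in> F)"
    and "h \<in> F"
  shows "smooth_on U h"
  unfolding smooth_on_def using Ck_on_if_derivatives_closed[OF assms(1)] assms(2) by blast

definition disk_maps :: "(('n::finite) hyp \<Rightarrow> 'n amb) set" where
  "disk_maps = {h. \<exists>c L g e. bounded_linear L \<and> g \<in> disk_algebra \<and> h = (\<lambda>x. c + L x + g x *\<^sub>R e)}"

lemma disk_maps_derivatives_closed:
  assumes "h \<in> disk_maps"
  shows "h differentiable_on UNIV \<and> (\<forall>v. (\<lambda>x. frechet_derivative h (at x) v) \<in> disk_maps)"
proof -
  obtain c L g e where L: "bounded_linear L" and g: "g \<in> disk_algebra"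
      and h: "h = (\<lambda>x. c + L x + g x *\<^sub>R e)"
    using assms unfolding disk_maps_def by blast
  obtain g' where g': "\<forall>x. (g has_derivative g' x) (at x)" "\<forall>v. (\<lambda>x. g' x v) \<in> disk_algebra"
    using disk_algebra_has_derivative[OF g] by blast
  have h': "(h has_derivative (\<lambda>v. L v + g' x v *\<^sub>R e)) (at x)" for x
    unfolding h using g'(1)[rule_format, of x]
    by (auto intro!: derivative_eq_intros bounded_linear_imp_has_derivative[OF L])
  have "frechet_derivative h (at x) = (\<lambda>v. L v + g' x v *\<^sub>R e)" for x
    using frechet_derivative_at[OF h'] by simp
  hence "(\<lambda>x. frechet_derivative h (at x) v) = (\<lambda>x. L v + 0 + g' x v *\<^sub>R e)" for v
    by simp
  hence "(\<lambda>x. frechet_derivative h (at x) v) \<in> disk_maps" for v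
    unfolding disk_maps_def using g'(2) bounded_linear_zero by blast
  moreover have "h differentiable_on UNIV"
    using h' unfolding differentiable_on_def differentiable_def by blast
  ultimately show ?thesis by blast
qed

lemma smooth_on_disk_maps: "h \<in> disk_maps \<Longrightarrow> smooth_on UNIV h"
  by (rule smooth_on_if_derivatives_closed[OF disk_maps_derivatives_closed])

definition emb_linear :: "real^'n \<Rightarrow> ('n::finite) hyp \<Rightarrow> 'n amb" where
  "emb_linear a x = ((fst (fst x), snd (fst x), a \<bullet> fst (snd x)), (fst (snd x), snd (snd x)))"

definition emb :: "real^'n \<Rightarrow> ('n::finite) hyp \<Rightarrow> 'n amb" where
  "emb a x = ((fst (fst x), snd (fst x), a \<bullet> fst (snd x)),
              (fst (snd x), snd (snd x) + cos_sqrt_diff 0 (radius_sq x) *\<^sub>R a))"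

lemma emb_eq: "emb a = (\<lambda>x. emb_linear a x + cos_sqrt_diff 0 (radius_sq x) *\<^sub>R ((0,0,0),(0,a)))"
  by (auto simp: emb_def emb_linear_def fun_eq_iff)

lemma bounded_linear_emb_linear: "bounded_linear (emb_linear a)"
proof -
  have "linear (emb_linear a)"
    by (rule linearI) (auto simp: emb_linear_def inner_add_right algebra_simps)
  thus ?thesis by (simp add: linear_conv_bounded_linear)
qed

lemma smooth_on_emb: "smooth_on UNIV (emb a)"
proof (rule smooth_on_disk_maps)
  have "emb a = (\<lambda>x. 0 + emb_linear a x + cos_sqrt_diff 0 (radius_sq x) *\<^sub>R ((0,0,0),(0,a)))"
    by (simp add: emb_eq)
  thus "emb a \<in> disk_maps"
    unfolding disk_maps_def using bounded_linear_emb_linear disk_algebra.cos_sqrt_diff by blast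
qed

lemma frechet_derivative_emb:
  "frechet_derivative (emb a) (at x) =
     (\<lambda>v. emb_linear a v + (cos_sqrt_diff 1 (radius_sq x) * radius_sq_deriv x v) *\<^sub>R ((0,0,0),(0,a)))"
proof -
  have "(emb a has_derivative (\<lambda>v. emb_linear a v +
      (cos_sqrt_diff 1 (radius_sq x) * radius_sq_deriv x v) *\<^sub>R ((0,0,0),(0,a)))) (at x)"
    unfolding emb_eq
    using cos_sqrt_diff_radius_sq_has_derivative[of 0 x]
      bounded_linear_imp_has_derivative[OF bounded_linear_emb_linear]
    by (auto intro!: derivative_eq_intros simp: One_nat_def zero_prod_def)
  thus ?thesis by (rule frechet_derivative_at[symmetric])
qed

lemma inj_frechet_derivative_emb: "inj (frechet_derivative (emb a) (at x))"
proof (rule injI)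
  fix v v' assume "frechet_derivative (emb a) (at x) v = frechet_derivative (emb a) (at x) v'"
  thus "v = v'"
    by (cases v; cases v') (auto simp: frechet_derivative_emb emb_linear_def radius_sq_deriv_def)
qed

lemma alpha_emb: "alpha (emb a x) (frechet_derivative (emb a) (at x) v) = beta x v"
proof -
  obtain u w s t where x: "x = ((u,w),(s,t))" by (metis prod.collapse)
  obtain du dw ds dt where v: "v = ((du,dw),(ds,dt))" by (metis prod.collapse)
  have "cos_sqrt_diff 0 (u^2 + w^2) = cos (sqrt (u^2+w^2))" by (rule cos_sqrt_diff_0) simp
  thus ?thesis
    by (simp add: x v frechet_derivative_emb emb_def emb_linear_def alpha_def beta_def
        radius_sq_def Let_def inner_vec_def sum.distrib sum_distrib_left sum_distrib_right
        algebra_simps)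
qed


lemma mult_sum_powers_less_power:
  fixes K N :: int
  assumes "0 \<le> K" "K + 1 \<le> N"
  shows "K * (\<Sum>i<M. N^i) < N^M"
proof (induction M)
  case 0 thus ?case by simp
next
  case (Suc M)
  have "K * (\<Sum>i<Suc M. N^i) = K * (\<Sum>i<M. N^i) + K * N^M" by (simp add: algebra_simps)
  also have "\<dots> < (K + 1) * N^M" using Suc by (simp add: algebra_simps)
  also have "\<dots> \<le> N * N^M" using assms by (intro mult_right_mono) auto
  finally show ?case by simp
qed

text \<open>Uniqueness of base \<open>N\<close> expansions with signed digits of size below \<open>N\<close>: the leading
  nonzero digit outweighs all lower ones.\<close>
lemma signed_digits_eq_0:
  fixes k :: "'n::finite \<Rightarrow> int" and f :: "'n \<Rightarrow> nat"
  assumes inj: "inj f" and k_bound: "\<forall>j. \<bar>k j\<bar> \<le> K" and "0 \<le> K" "K + 1 \<le> N"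
    and sum_eq_0: "(\<Sum>j\<in>UNIV. k j * N^f j) = 0"
  shows "k j = 0"
proof (rule ccontr)
  assume "k j \<noteq> 0"
  define J where "J = {j. k j \<noteq> 0}"
  define M where "M = Max (f ` J)"
  have "M \<in> f ` J" unfolding M_def using \<open>k j \<noteq> 0\<close> by (intro Max_in) (auto simp: J_def)
  then obtain j0 where j0: "j0 \<in> J" "f j0 = M" by auto
  have N_pos: "1 \<le> N" using assms by simp
  have lower: "f ` (J - {j0}) \<subseteq> {..<M}"
  proof
    fix i assume "i \<in> f ` (J - {j0})"
    then obtain j' where j': "j' \<in> J" "j' \<noteq> j0" "i = f j'" by auto
    have "f j' \<noteq> f j0" using j' inj by (auto dest: injD)
    moreover have "f j' \<le> M" unfolding M_def using j' by (intro Max_ge) auto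
    ultimately show "i \<in> {..<M}" using j' j0 by auto
  qed
  have "(\<Sum>j\<in>UNIV. k j * N^f j) = (\<Sum>j\<in>J. k j * N^f j)"
    by (rule sum.mono_neutral_right) (auto simp: J_def)
  also have "\<dots> = k j0 * N^M + (\<Sum>j\<in>J-{j0}. k j * N^f j)"
    using j0 by (simp add: sum.remove)
  finally have eq: "k j0 * N^M = - (\<Sum>j\<in>J-{j0}. k j * N^f j)" using sum_eq_0 by simp
  have "\<bar>\<Sum>j\<in>J-{j0}. k j * N^f j\<bar> \<le> (\<Sum>j\<in>J-{j0}. K * N^f j)"
    by (rule order_trans[OF sum_abs sum_mono])
       (use k_bound N_pos in \<open>auto simp: abs_mult intro!: mult_right_mono\<close>)
  also have "\<dots> = K * (\<Sum>i\<in>f`(J-{j0}). N^i)"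
    by (simp add: sum_distrib_left sum.reindex inj_on_subset[OF inj])
  also have "\<dots> \<le> K * (\<Sum>i<M. N^i)"
    using assms N_pos lower by (intro mult_left_mono sum_mono2) auto
  also have "\<dots> < N^M" by (rule mult_sum_powers_less_power) fact+
  also have "\<dots> \<le> \<bar>k j0\<bar> * N^M"
    using j0 N_pos by (auto simp: J_def intro!: mult_right_mono)
  finally have "\<bar>k j0 * N^M\<bar> < \<bar>k j0\<bar> * N^M" using eq by simp
  thus False using N_pos by (simp add: abs_mult)
qed

lemma cis_eq_imp_eq_mod_2pi: "cis x = cis y \<Longrightarrow> \<exists>n::int. x = y + 2 * pi * n"
  using sin_cos_eq_iff[of x y] by (auto simp: complex_eq_iff)

lemma proj_amb_emb:
  "(proj_amb \<circ> emb a) x = ((fst (fst x), snd (fst x), a \<bullet> fst (snd x)),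
     (tor (fst (snd x)), snd (snd x) + cos_sqrt_diff 0 (radius_sq x) *\<^sub>R a))"
  by (simp add: proj_amb_def emb_def split: prod.splits)

lemma continuous_on_proj_amb_emb: "continuous_on UNIV (proj_amb \<circ> emb a)"
proof -
  have "continuous_on UNIV (\<lambda>x. cos_sqrt_diff 0 (radius_sq x))"
    by (intro continuous_at_imp_continuous_on ballI
        has_derivative_continuous[OF cos_sqrt_diff_radius_sq_has_derivative])
  thus ?thesis unfolding proj_amb_emb[abs_def] tor_def by (intro continuous_intros)
qed

lemma inj_on_proj_amb_emb:
  fixes f :: "'n::finite \<Rightarrow> nat" and K :: int
  assumes inj: "inj f" and "0 \<le> K" and C_le: "C \<le> pi * K" and "\<eta> > 0"
  defines "a \<equiv> \<chi> j. \<eta> * real_of_int (K + 1) ^ f j"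
  shows "inj_on (proj_amb \<circ> emb a) {x. \<forall>j. \<bar>fst (snd x) $ j\<bar> \<le> C}"
proof (rule inj_onI)
  fix x y :: "'n hyp"
  assume x: "x \<in> {x. \<forall>j. \<bar>fst (snd x) $ j\<bar> \<le> C}" and y: "y \<in> {x. \<forall>j. \<bar>fst (snd x) $ j\<bar> \<le> C}"
    and eq: "(proj_amb \<circ> emb a) x = (proj_amb \<circ> emb a) y"
  obtain u w s t where x_eq: "x = ((u,w),(s,t))" by (metis prod.collapse)
  obtain u' w' s' t' where y_eq: "y = ((u',w'),(s',t'))" by (metis prod.collapse)
  from eq[unfolded proj_amb_emb x_eq y_eq]
  have same: "u = u'" "w = w'" "t = t'" and "a \<bullet> s = a \<bullet> s'" "tor s = tor s'"
    by (auto simp: radius_sq_def)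
  have "\<exists>n::int. s $ j = s' $ j + 2 * pi * n" for j
    using \<open>tor s = tor s'\<close> by (intro cis_eq_imp_eq_mod_2pi) (metis tor_def vec_lambda_beta)
  then obtain k :: "'n \<Rightarrow> int" where k: "\<And>j. s $ j = s' $ j + 2 * pi * k j" by metis
  have k_bound: "\<forall>j. \<bar>k j\<bar> \<le> K"
  proof
    fix j
    have "\<bar>s $ j\<bar> \<le> C" "\<bar>s' $ j\<bar> \<le> C" using x y by (auto simp: x_eq y_eq)
    hence "2 * pi * \<bar>k j\<bar> \<le> 2 * C" using k[of j] by (simp add: abs_mult)
    hence "pi * \<bar>k j\<bar> \<le> pi * K" using C_le by linarith
    hence "\<bar>real_of_int (k j)\<bar> \<le> real_of_int K" by simp
    thus "\<bar>k j\<bar> \<le> K" by linarith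
  qed
  have "0 = a \<bullet> s - a \<bullet> s'" using \<open>a \<bullet> s = a \<bullet> s'\<close> by simp
  also have "\<dots> = (2 * pi * \<eta>) * real_of_int (\<Sum>j\<in>UNIV. k j * (K + 1) ^ f j)"
    by (simp add: a_def inner_vec_def k sum_subtractf[symmetric] sum_distrib_left algebra_simps)
  finally have "real_of_int (\<Sum>j\<in>UNIV. k j * (K + 1) ^ f j) = 0" using \<open>\<eta> > 0\<close> by simp
  hence "(\<Sum>j\<in>UNIV. k j * (K + 1) ^ f j) = 0" by (simp only: of_int_eq_0_iff)
  hence "k j = 0" for j
    by (rule signed_digits_eq_0[OF inj k_bound \<open>0 \<le> K\<close>, rotated]) simp
  hence "s = s'" using k by (simp add: vec_eq_iff)
  thus "x = y" using x_eq y_eq same by simp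
qed


lemma exists_separating_weights:
  assumes "\<eta> > 0"
  shows "\<exists>a :: real^'n::finite. (\<forall>j. 0 \<le> a $ j) \<and> (\<Sum>j\<in>UNIV. a $ j) < \<eta> \<and>
           inj_on (proj_amb \<circ> emb a) {x. \<forall>j. \<bar>fst (snd x) $ j\<bar> \<le> C}"
proof -
  obtain f :: "'n \<Rightarrow> nat" where "inj f"
    using finite_imp_inj_to_nat_seg[of "UNIV :: 'n set"] by auto
  define K :: int where "K = max 0 \<lceil>C / pi\<rceil>"
  have "0 \<le> K" by (simp add: K_def)
  have "C / pi \<le> K" unfolding K_def by linarith
  hence "C \<le> pi * K" by (simp add: divide_le_eq mult.commute)
  define A where "A = (\<Sum>j\<in>(UNIV::'n set). real_of_int (K + 1) ^ f j)"
  have "A > 0" unfolding A_def using \<open>0 \<le> K\<close> by (intro sum_pos) auto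
  define a :: "real^'n" where "a = (\<chi> j. \<eta> / (2 * A) * real_of_int (K + 1) ^ f j)"
  have "(\<Sum>j\<in>UNIV. a $ j) = \<eta> / (2 * A) * A"
    unfolding a_def A_def by (simp add: sum_distrib_left)
  hence sum_a: "(\<Sum>j\<in>UNIV. a $ j) = \<eta> / 2" using \<open>A > 0\<close> by simp
  have "\<forall>j. 0 \<le> a $ j" unfolding a_def using assms \<open>A > 0\<close> \<open>0 \<le> K\<close> by simp
  moreover have "(\<Sum>j\<in>UNIV. a $ j) < \<eta>" using sum_a assms by simp
  moreover have "inj_on (proj_amb \<circ> emb a) {x. \<forall>j. \<bar>fst (snd x) $ j\<bar> \<le> C}"
    unfolding a_def using assms \<open>A > 0\<close>
    by (intro inj_on_proj_amb_emb[OF \<open>inj f\<close> \<open>0 \<le> K\<close> \<open>C \<le> pi * K\<close>]) simp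
  ultimately show ?thesis by blast
qed

definition closed_S_C :: "real \<Rightarrow> real \<Rightarrow> ('n::finite) hyp set" where
  "closed_S_C C D = {x. fst (fst x)^2 + snd (fst x)^2 \<le> pi^2 \<and>
      (\<forall>j. \<bar>fst (snd x) $ j\<bar> \<le> C \<and> \<bar>snd (snd x) $ j\<bar> \<le> D)}"

lemma compact_closed_S_C: "compact (closed_S_C C D :: ('n::finite) hyp set)"
proof -
  have disk: "fst p^2 + snd p^2 \<le> pi^2 \<longleftrightarrow> p \<in> cball 0 pi" for p :: "real \<times> real"
    using real_le_lsqrt[of pi] sqrt_le_D[of _ pi] by (auto simp: norm_prod_def)
  have "closed_S_C C D = cball 0 pi \<times>
     (cbox (-(\<chi> j. C)) (\<chi> j. C) \<times> cbox (-(\<chi> j. D)) (\<chi> j. D) :: ((real^'n) \<times> (real^'n)) set)"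
    by (auto simp: closed_S_C_def disk mem_box_cart abs_le_iff) (metis minus_le_iff)+
  thus ?thesis by (simp add: compact_Times)
qed

lemma continuous_on_inv_into_compact_superset:
  fixes f :: "'a::topological_space \<Rightarrow> 'b::t2_space"
  assumes "continuous_on K f" "compact K" "inj_on f K" "S \<subseteq> K"
  shows "continuous_on (f ` S) (inv_into S f)"
proof -
  have "continuous_on (f ` K) (inv_into K f)"
    by (rule continuous_on_inv[OF assms(1,2)]) (use assms(3) in auto)
  hence "continuous_on (f ` S) (inv_into K f)"
    by (rule continuous_on_subset) (use assms(4) in auto)
  moreover have "inv_into K f y = inv_into S f y" if "y \<in> f ` S" for y
    using that assms(3,4) inj_on_subset[OF assms(3,4)] by (auto intro: inv_into_f_f)
  ultimately show ?thesis using continuous_on_cong by blast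
qed

lemma abs_inner_le_sum:
  fixes a s :: "real^'n::finite"
  assumes "\<forall>j. 0 \<le> a $ j" "\<forall>j. \<bar>s $ j\<bar> \<le> C"
  shows "\<bar>a \<bullet> s\<bar> \<le> C * (\<Sum>j\<in>UNIV. a $ j)"
proof -
  have "\<bar>a \<bullet> s\<bar> \<le> (\<Sum>j\<in>UNIV. \<bar>a $ j * s $ j\<bar>)"
    unfolding inner_vec_def inner_real_def by (rule sum_abs)
  also have "\<dots> \<le> (\<Sum>j\<in>UNIV. a $ j * C)"
    using assms by (intro sum_mono) (simp add: abs_mult mult_left_mono)
  finally show ?thesis by (simp add: sum_distrib_left mult.commute)
qed

lemma norm_less_sqrt_card:
  fixes t :: "real^'n::finite"
  assumes "\<forall>j. \<bar>t $ j\<bar> < D"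
  shows "norm t < D * sqrt (real CARD('n))"
proof -
  have "(\<Sum>j\<in>UNIV. (t $ j)^2) < (\<Sum>j\<in>(UNIV::'n set). D^2)"
  proof (rule sum_strict_mono)
    fix j :: 'n
    show "(t $ j)^2 < D^2" using assms power_strict_mono[of "\<bar>t $ j\<bar>" D 2] by simp
  qed auto
  hence "norm t < sqrt (real CARD('n) * D^2)" by (simp add: norm_vec_def L2_set_def)
  also have "\<dots> = D * sqrt (real CARD('n))"
    using assms[rule_format, of undefined] by (simp add: real_sqrt_mult mult.commute)
  finally show ?thesis .
qed

lemma emb_S_C_subset_target:
  fixes a :: "real^'n::finite"
  assumes a_nonneg: "\<forall>j. 0 \<le> a $ j" and "C * (\<Sum>j\<in>UNIV. a $ j) < \<epsilon>"
    and "(\<Sum>j\<in>UNIV. a $ j) < \<delta> / 2" and "\<delta>\<^sub>0 > 0"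
  shows "emb a ` S_C C \<delta> \<subseteq> target \<delta>\<^sub>0 \<epsilon> \<delta>"
proof
  fix y assume "y \<in> emb a ` S_C C \<delta>"
  then obtain u w s t where x: "((u,w),(s,t)) \<in> S_C C \<delta>" and y: "y = emb a ((u,w),(s,t))"
    by auto
  have "u^2 + w^2 \<le> pi^2" and s: "\<forall>j. \<bar>s $ j\<bar> < C"
      and t: "\<forall>j. \<bar>t $ j\<bar> < \<delta> / (2 * sqrt (real CARD('n)))"
    using x unfolding S_C_def by auto
  moreover have "pi^2 < (pi + \<delta>\<^sub>0)^2" using \<open>\<delta>\<^sub>0 > 0\<close> by (intro power_strict_mono) auto
  ultimately have disk: "u^2 + w^2 < (pi + \<delta>\<^sub>0)^2" by linarith
  have "\<bar>a \<bullet> s\<bar> < \<epsilon>"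
    using abs_inner_le_sum[OF a_nonneg, of s C] s assms(2) by (simp add: less_imp_le)
  have "norm t < \<delta> / 2" using norm_less_sqrt_card[OF t] by simp
  let ?c = "cos_sqrt_diff 0 (radius_sq ((u,w),(s,t)))"
  have "\<bar>?c\<bar> \<le> 1" by (simp add: cos_sqrt_diff_0 radius_sq_def)
  have "norm (t + ?c *\<^sub>R a) \<le> norm t + \<bar>?c\<bar> * norm a"
    using norm_triangle_ineq[of t "?c *\<^sub>R a"] by simp
  also have "\<dots> \<le> norm t + norm a"
    using \<open>\<bar>?c\<bar> \<le> 1\<close> by (simp add: mult_left_le_one_le)
  also have "\<dots> \<le> norm t + (\<Sum>j\<in>UNIV. a $ j)"
    using norm_le_l1_cart[of a] a_nonneg by simp
  also have "\<dots> < \<delta>" using \<open>norm t < \<delta> / 2\<close> assms(3) by simp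
  finally show "y \<in> target \<delta>\<^sub>0 \<epsilon> \<delta>"
    using disk \<open>\<bar>a \<bullet> s\<bar> < \<epsilon>\<close> by (simp add: y target_def emb_def)
qed


theorem mainTheorem4:
  fixes \<epsilon> \<delta> \<delta>\<^sub>0 C :: real
  assumes "\<epsilon> > 0" and "\<delta> > 0" and "\<delta>\<^sub>0 > 0" and "C > 0"
  shows "\<exists>(U :: ('n::finite) hyp set) (\<iota> :: 'n hyp \<Rightarrow> 'n amb).
     open U \<and> S_C C \<delta> \<subseteq> U \<and> smooth_on U \<iota> \<and>
     (\<forall>x\<in>S_C C \<delta>. inj (frechet_derivative \<iota> (at x))) \<and>
     inj_on (proj_amb \<circ> \<iota>) (S_C C \<delta>) \<and>
     continuous_on ((proj_amb \<circ> \<iota>) ` S_C C \<delta>) (inv_into (S_C C \<delta>) (proj_amb \<circ> \<iota>)) \<and>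
     \<iota> ` S_C C \<delta> \<subseteq> target \<delta>\<^sub>0 \<epsilon> \<delta> \<and>
     (\<forall>x\<in>S_C C \<delta>. \<forall>v. alpha (\<iota> x) (frechet_derivative \<iota> (at x) v) = 0 \<longleftrightarrow> beta x v = 0)"
proof -
  obtain a :: "real^'n" where a_nonneg: "\<forall>j. 0 \<le> a $ j"
      and a_small: "(\<Sum>j\<in>UNIV. a $ j) < min (\<epsilon> / C) (\<delta> / 2)"
      and inj: "inj_on (proj_amb \<circ> emb a) {x. \<forall>j. \<bar>fst (snd x) $ j\<bar> \<le> C}"
    using exists_separating_weights[of "min (\<epsilon> / C) (\<delta> / 2)" C] assms by auto
  define D where "D = \<delta> / (2 * sqrt (real CARD('n)))"
  have S_C_sub: "S_C C \<delta> \<subseteq> (closed_S_C C D :: 'n hyp set)"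
    unfolding S_C_def closed_S_C_def D_def by (auto intro: less_imp_le)
  have closed_sub: "closed_S_C C D \<subseteq> {x. \<forall>j. \<bar>fst (snd x) $ j\<bar> \<le> C}"
    unfolding closed_S_C_def by auto
  have "C * (\<Sum>j\<in>UNIV. a $ j) < \<epsilon>"
    using a_small \<open>C > 0\<close> by (simp add: less_divide_eq mult.commute)
  hence "emb a ` S_C C \<delta> \<subseteq> target \<delta>\<^sub>0 \<epsilon> \<delta>"
    using emb_S_C_subset_target[OF a_nonneg] a_small \<open>\<delta>\<^sub>0 > 0\<close> by simp
  moreover have "continuous_on ((proj_amb \<circ> emb a) ` S_C C \<delta>) (inv_into (S_C C \<delta>) (proj_amb \<circ> emb a))"
    by (rule continuous_on_inv_into_compact_superset[OF
          continuous_on_subset[OF continuous_on_proj_amb_emb] compact_closed_S_C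
          inj_on_subset[OF inj closed_sub] S_C_sub]) simp
  ultimately show ?thesis
    using inj_on_subset[OF inj order_trans[OF S_C_sub closed_sub]]
    by (intro exI[of _ UNIV] exI[of _ "emb a"])
       (simp add: smooth_on_emb inj_frechet_derivative_emb alpha_emb)
qed

end
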